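(* Let $A=(a_{\mathbf i})_{\mathbf i\in[n]^d}$ be a real $d$-tensor, $I\subseteq[d]$, and fix $\mathbf i_I\in[n]^I$. Call a set $C\subseteq[n]^d$ admissible if $\|(A\circ1_C)_{\mathbf i_{I^c}}\|_{\mathcal J}\le\|A_{\mathbf i_{I^c}}\|_{\mathcal J}$ for every real $d$-tensor $A$ and every partition $\mathcal J$ of $I^c$. Then: (1) every generalized row $C=\{\mathbf i: i_{k_1}=j_1,\dots,i_{k_l}=j_l\}$ ($1\le k_1<\dots<k_l\le d$, $j_1,\dots,j_l\in[n]$) is admissible; (2) every generalized diagonal $C=\{\mathbf i: i_k=i_l\ \forall k,l\in K\}$ ($K\subseteq[d]$) is admissible; (3) if $C_1,C_2$ are admissible, so is $C_1\cap C_2$; (4) for every partition $\mathcal K$ of $[d]$ and every partition $\mathcal J$ of $I^c$, $\|(A\circ1_{L(\mathcal K)})_{\mathbf i_{I^c}}\|_{\mathcal J}\le2^{|\mathcal K|(|\mathcal K|-1)/2}\|A_{\mathbf i_{I^c}}\|_{\mathcal J}$; (5) for all $v_1,\dots,v_d\in\mathbb{R}^n$ and every partition $\mathcal J$ of $I^c$, $\|(A\circ\bigotimes_{i=1}^dv_i)_{\mathbf i_{I^c}}\|_{\mathcal J}\le\|A_{\mathbf i_{I^c}}\|_{\mathcal J}\prod_{i=1}^d\|v_i\|_\infty$.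
   Context: $\circ$ denotes the entrywise product, $1_C$ the $0/1$ indicator tensor of $C\subseteq[n]^d$, $(v_1\otimes\cdots\otimes v_d)_{\mathbf i}=\prod_j(v_j)_{i_j}$. For $\mathcal K=\{K_1,\dots,K_a\}$ a partition of $[d]$, $L(\mathcal K)=\{\mathbf i\in[n]^d:i_k=i_l\iff\exists j:k,l\in K_j\}$. $B_{\mathbf i_{I^c}}$ is the tensor indexed by $[n]^{I^c}$ obtained from a $d$-tensor $B$ by fixing the indices in $I$ to $\mathbf i_I$. For a tensor $B$ indexed by $[n]^S$ and a partition $\mathcal J=\{J_1,\dots,J_k\}$ of $S$, $\|B\|_{\mathcal J}:=\sup\{\sum_{\mathbf i\in[n]^S}b_{\mathbf i}\prod_lx^{(l)}_{\mathbf i_{J_l}}:x^{(l)}\in\mathbb{R}^{[n]^{J_l}},\|x^{(l)}\|_2\le1\}$. If $I=[d]$, the only partition of $I^c$ is the empty one and the norm is $|a_{\mathbf i}|$. *)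

theory Defs
  imports "HOL-Analysis.Analysis" "HOL-Library.Disjoint_Sets"
begin

text \<open>Conventions: [d] = {..<d}, [n] = {..<n} (0-based). A d-tensor is a map (nat \<Rightarrow> nat) \<Rightarrow> real,
  of which only the values on [n]^d matter.\<close>

definition idx :: "nat \<Rightarrow> nat set \<Rightarrow> (nat \<Rightarrow> nat) set" where
  "idx n S = PiE S (\<lambda>_. {..<n})"

definition mask :: "((nat \<Rightarrow> nat) \<Rightarrow> real) \<Rightarrow> (nat \<Rightarrow> nat) set \<Rightarrow> ((nat \<Rightarrow> nat) \<Rightarrow> real)" where
  "mask A C = (\<lambda>i. A i * indicator C i)"

definition slice :: "((nat \<Rightarrow> nat) \<Rightarrow> real) \<Rightarrow> nat set \<Rightarrow> (nat \<Rightarrow> nat) \<Rightarrow> ((nat \<Rightarrow> nat) \<Rightarrow> real)" where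
  "slice A I iI = (\<lambda>j. A (\<lambda>k. if k \<in> I then iI k else j k))"

text \<open>The partition norm \<parallel>B\<parallel>_J of a tensor B indexed by [n]^S, J a partition of S.
  For the empty partition (S = {}) it is |b| by the paper's convention.\<close>
definition pnorm :: "nat \<Rightarrow> nat set \<Rightarrow> nat set set \<Rightarrow> ((nat \<Rightarrow> nat) \<Rightarrow> real) \<Rightarrow> real" where
  "pnorm n S J B =
    (if J = {} then \<bar>\<Sum>i\<in>idx n S. B i\<bar>
     else Sup {(\<Sum>i\<in>idx n S. B i * (\<Prod>Jl\<in>J. x Jl (restrict i Jl))) | x.
                \<forall>Jl\<in>J. (\<Sum>j\<in>idx n Jl. (x Jl j)\<^sup>2) \<le> 1})"

definition admissible :: "nat \<Rightarrow> nat \<Rightarrow> nat set \<Rightarrow> (nat \<Rightarrow> nat) \<Rightarrow> (nat \<Rightarrow> nat) set \<Rightarrow> bool" where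
  "admissible n d I iI C \<longleftrightarrow> C \<subseteq> idx n {..<d} \<and>
     (\<forall>(A :: (nat \<Rightarrow> nat) \<Rightarrow> real) J. partition_on ({..<d} - I) J \<longrightarrow>
        pnorm n ({..<d} - I) J (slice (mask A C) I iI) \<le> pnorm n ({..<d} - I) J (slice A I iI))"

definition Lset :: "nat \<Rightarrow> nat \<Rightarrow> nat set set \<Rightarrow> (nat \<Rightarrow> nat) set" where
  "Lset n d K = {i \<in> idx n {..<d}. \<forall>k<d. \<forall>l<d. (i k = i l \<longleftrightarrow> (\<exists>B\<in>K. k \<in> B \<and> l \<in> B))}"

definition tprod :: "nat \<Rightarrow> (nat \<Rightarrow> nat \<Rightarrow> real) \<Rightarrow> ((nat \<Rightarrow> nat) \<Rightarrow> real)" where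
  "tprod d v = (\<lambda>i. \<Prod>k<d. v k (i k))"

definition supnorm :: "nat \<Rightarrow> (nat \<Rightarrow> real) \<Rightarrow> real" where
  "supnorm n w = Max {\<bar>w j\<bar> | j. j < n}"

end

theory Submission
  imports Defs
begin

text \<open>All bounds come from the variational definition of the partition norm. Multiplying a slice
  by a weight that factors over the blocks of \<J>, \<open>c \<cdot> \<Prod>\<^sub>l w\<^sub>l(i\<^sub>l)\<close> with \<open>|c|, |w\<^sub>l| \<le> 1\<close>, only
  rescales the test vectors, so it cannot increase the norm; generalized rows, and diagonals that
  meet I or lie inside one block, have such factorized indicators, and so does
  \<open>v\<^sub>1 \<otimes> \<dots> \<otimes> v\<^sub>d\<close> up to the factor \<open>\<Prod> \<parallel>v\<^sub>i\<parallel>\<^sub>\<infinity>\<close>. A diagonal meeting two blocks \<open>l\<^sub>1 \<noteq> l\<^sub>2\<close> is a sum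
  over the common value t of factorized indicators; the corresponding test vectors have squared
  norms summing to at most 1 over t on \<open>l\<^sub>1\<close> and on \<open>l\<^sub>2\<close>, and AM-GM bounds the total factor by 1.
  Finally L(\<K>) consists of the indices constant on every block of \<K> minus those constant on
  the union of some pair of blocks; removing the pairs one at a time costs a triangle inequality
  each, whence the factor \<open>2^(|\<K>| choose 2)\<close>.\<close>

definition join_idx :: "nat set \<Rightarrow> (nat \<Rightarrow> nat) \<Rightarrow> (nat \<Rightarrow> nat) \<Rightarrow> (nat \<Rightarrow> nat)" where
  "join_idx I iI j = (\<lambda>k. if k \<in> I then iI k else j k)"

definition pform :: "nat \<Rightarrow> nat set \<Rightarrow> nat set set \<Rightarrow> ((nat \<Rightarrow> nat) \<Rightarrow> real)
    \<Rightarrow> (nat set \<Rightarrow> (nat \<Rightarrow> nat) \<Rightarrow> real) \<Rightarrow> real" where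
  "pform n S J B x = (\<Sum>i\<in>idx n S. B i * (\<Prod>l\<in>J. x l (restrict i l)))"

definition bnorm :: "nat \<Rightarrow> nat set \<Rightarrow> ((nat \<Rightarrow> nat) \<Rightarrow> real) \<Rightarrow> real" where
  "bnorm n l f = sqrt (\<Sum>u\<in>idx n l. (f u)\<^sup>2)"

lemma finite_idx: "finite S \<Longrightarrow> finite (idx n S)"
  by (simp add: idx_def finite_PiE)

lemma restrict_in_idx: "j \<in> idx n S \<Longrightarrow> l \<subseteq> S \<Longrightarrow> restrict j l \<in> idx n l"
  by (auto simp: idx_def PiE_iff)

lemma join_idx_in_idx:
  "iI \<in> idx n I \<Longrightarrow> I \<subseteq> {..<d} \<Longrightarrow> j \<in> idx n ({..<d} - I) \<Longrightarrow> join_idx I iI j \<in> idx n {..<d}"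
  by (auto simp: idx_def join_idx_def PiE_iff extensional_def)

lemma slice_eq: "slice A I iI j = A (join_idx I iI j)"
  by (simp add: slice_def join_idx_def)

lemma bnorm_nonneg: "0 \<le> bnorm n l f"
  by (simp add: bnorm_def sum_nonneg)

lemma bnorm_le_1_iff: "bnorm n l f \<le> 1 \<longleftrightarrow> (\<Sum>u\<in>idx n l. (f u)\<^sup>2) \<le> 1"
  by (simp add: bnorm_def)

lemma
  assumes "finite S" "partition_on S J"
  shows partition_on_finite: "finite J"
    and partition_on_block_subset: "l \<in> J \<Longrightarrow> l \<subseteq> S"
    and partition_on_finite_idx: "l \<in> J \<Longrightarrow> finite (idx n l)"
proof -
  show "finite J" using assms finite_elements by blast
  show sub: "l \<subseteq> S" if "l \<in> J" using assms that by (auto simp: partition_on_def)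
  show "finite (idx n l)" if "l \<in> J"
    using sub[OF that] assms(1) by (intro finite_idx) (rule finite_subset)
qed

lemma pnorm_eq_Sup:
  "J \<noteq> {} \<Longrightarrow> pnorm n S J B = Sup {pform n S J B x | x. \<forall>l\<in>J. bnorm n l (x l) \<le> 1}"
  by (simp add: pnorm_def pform_def bnorm_le_1_iff)

lemma abs_le_1_of_sum_squares_le_1:
  fixes f :: "'a \<Rightarrow> real"
  assumes "finite A" "(\<Sum>u\<in>A. (f u)\<^sup>2) \<le> 1" "u \<in> A"
  shows "\<bar>f u\<bar> \<le> 1"
proof -
  have "(f u)\<^sup>2 \<le> (\<Sum>u\<in>A. (f u)\<^sup>2)" using assms by (intro member_le_sum) auto
  then have "(f u)\<^sup>2 \<le> 1" using assms(2) by linarith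
  then show ?thesis by (simp add: abs_square_le_1)
qed

lemma bnorm_scale: "bnorm n l (\<lambda>u. c * f u) = \<bar>c\<bar> * bnorm n l f"
  by (simp add: bnorm_def power_mult_distrib sum_distrib_left[symmetric] real_sqrt_mult)

lemma bnorm_mult_le:
  assumes "finite (idx n l)" "0 \<le> M" "\<And>u. u \<in> idx n l \<Longrightarrow> \<bar>w u\<bar> \<le> M"
  shows "bnorm n l (\<lambda>u. w u * f u) \<le> M * bnorm n l f"
proof -
  have "(\<Sum>u\<in>idx n l. (w u * f u)\<^sup>2) \<le> (\<Sum>u\<in>idx n l. M\<^sup>2 * (f u)\<^sup>2)"
  proof (rule sum_mono)
    fix u assume "u \<in> idx n l"
    then have "(w u)\<^sup>2 \<le> M\<^sup>2" using assms(3) by (simp add: abs_le_square_iff[symmetric] assms(2))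
    then show "(w u * f u)\<^sup>2 \<le> M\<^sup>2 * (f u)\<^sup>2" by (simp add: power_mult_distrib mult_right_mono)
  qed
  then have "bnorm n l (\<lambda>u. w u * f u) \<le> sqrt (M\<^sup>2 * (\<Sum>u\<in>idx n l. (f u)\<^sup>2))"
    unfolding bnorm_def by (simp add: sum_distrib_left)
  also have "\<dots> = M * bnorm n l f" using assms(2) by (simp add: bnorm_def real_sqrt_mult)
  finally show ?thesis .
qed

lemma pform_cong:
  assumes "partition_on S J" "\<And>l u. l \<in> J \<Longrightarrow> u \<in> idx n l \<Longrightarrow> x l u = y l u"
  shows "pform n S J B x = pform n S J B y"
  unfolding pform_def
proof (intro sum.cong refl arg_cong2[where f = "(*)"] prod.cong)
  fix i l assume "i \<in> idx n S" "l \<in> J"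
  moreover have "l \<subseteq> S" using assms(1) \<open>l \<in> J\<close> by (auto simp: partition_on_def)
  ultimately show "x l (restrict i l) = y l (restrict i l)" by (intro assms(2) restrict_in_idx)
qed

lemma pform_scale:
  "pform n S J B (\<lambda>l u. c l * x l u) = (\<Prod>l\<in>J. c l) * pform n S J B x"
  by (simp add: pform_def prod.distrib sum_distrib_left mult_ac)

lemma pform_diff: "pform n S J (\<lambda>i. B1 i - B2 i) x = pform n S J B1 x - pform n S J B2 x"
  by (simp add: pform_def sum_subtractf left_diff_distrib)

lemma pform_mult_weight:
  "pform n S J (\<lambda>i. B i * (c * (\<Prod>l\<in>J. w l (restrict i l)))) x
     = c * pform n S J B (\<lambda>l u. w l u * x l u)"
  by (simp add: pform_def prod.distrib sum_distrib_left mult_ac)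

lemma bdd_above_pform:
  assumes S: "finite S" and J: "partition_on S J"
  shows "bdd_above {pform n S J B x | x. \<forall>l\<in>J. bnorm n l (x l) \<le> 1}"
proof (rule bdd_aboveI)
  fix v assume "v \<in> {pform n S J B x | x. \<forall>l\<in>J. bnorm n l (x l) \<le> 1}"
  then obtain x where v: "v = pform n S J B x" and x: "\<forall>l\<in>J. bnorm n l (x l) \<le> 1" by blast
  have "B i * (\<Prod>l\<in>J. x l (restrict i l)) \<le> \<bar>B i\<bar>" if i: "i \<in> idx n S" for i
  proof -
    have "\<bar>x l (restrict i l)\<bar> \<le> 1" if l: "l \<in> J" for l
    proof (rule abs_le_1_of_sum_squares_le_1[OF partition_on_finite_idx[OF S J l], where f = "x l"])
      show "(\<Sum>u\<in>idx n l. (x l u)\<^sup>2) \<le> 1" using x l by (simp add: bnorm_le_1_iff)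
      show "restrict i l \<in> idx n l" using i partition_on_block_subset[OF S J l] by (rule restrict_in_idx)
    qed
    then have "\<bar>\<Prod>l\<in>J. x l (restrict i l)\<bar> \<le> 1"
      unfolding abs_prod by (intro prod_le_1) auto
    then have "\<bar>B i * (\<Prod>l\<in>J. x l (restrict i l))\<bar> \<le> \<bar>B i\<bar>"
      by (simp add: abs_mult mult_left_le)
    then show ?thesis by linarith
  qed
  then show "v \<le> (\<Sum>i\<in>idx n S. \<bar>B i\<bar>)" unfolding v pform_def by (rule sum_mono)
qed

lemma pform_le_pnorm:
  assumes "finite S" "partition_on S J" "J \<noteq> {}" "\<forall>l\<in>J. bnorm n l (x l) \<le> 1"
  shows "pform n S J B x \<le> pnorm n S J B"
  unfolding pnorm_eq_Sup[OF assms(3)]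
  by (intro cSup_upper bdd_above_pform) (use assms in auto)

lemma pnorm_le_bound:
  assumes "J \<noteq> {}" "\<And>x. \<forall>l\<in>J. bnorm n l (x l) \<le> 1 \<Longrightarrow> pform n S J B x \<le> M"
  shows "pnorm n S J B \<le> M"
  unfolding pnorm_eq_Sup[OF assms(1)]
proof (rule cSup_least)
  have "pform n S J B (\<lambda>_ _. 0) \<in> {pform n S J B x |x. \<forall>l\<in>J. bnorm n l (x l) \<le> 1}"
    by (rule CollectI, rule exI[of _ "\<lambda>_ _. 0"]) (simp add: bnorm_def)
  then show "{pform n S J B x |x. \<forall>l\<in>J. bnorm n l (x l) \<le> 1} \<noteq> {}" by (metis empty_iff)
next
  fix v assume "v \<in> {pform n S J B x |x. \<forall>l\<in>J. bnorm n l (x l) \<le> 1}"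
  then obtain x where "v = pform n S J B x" "\<forall>l\<in>J. bnorm n l (x l) \<le> 1" by blast
  then show "v \<le> M" using assms(2) by simp
qed

lemma pnorm_nonneg:
  assumes "finite S" "partition_on S J"
  shows "0 \<le> pnorm n S J B"
proof (cases "J = {}")
  case False
  have "pform n S J B (\<lambda>_ _. 0) = 0"
    using False partition_on_finite[OF assms] by (simp add: pform_def zero_power card_gt_0_iff)
  then show ?thesis using pform_le_pnorm[OF assms False, where x = "\<lambda>_ _. 0" and n = n and B = B] by (simp add: bnorm_def)
qed (simp add: pnorm_def)

lemma pnorm_cong:
  assumes "\<And>i. i \<in> idx n S \<Longrightarrow> B1 i = B2 i"
  shows "pnorm n S J B1 = pnorm n S J B2"
proof -
  have "(\<Sum>i\<in>idx n S. B1 i * f i) = (\<Sum>i\<in>idx n S. B2 i * f i)" for f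
    using assms by (intro sum.cong) auto
  moreover have "(\<Sum>i\<in>idx n S. B1 i) = (\<Sum>i\<in>idx n S. B2 i)"
    using assms by (intro sum.cong) auto
  ultimately show ?thesis unfolding pnorm_def by simp
qed

lemma pform_le_pnorm_mult_bnorm:
  assumes S: "finite S" and J: "partition_on S J" and Jne: "J \<noteq> {}"
  shows "pform n S J B z \<le> pnorm n S J B * (\<Prod>l\<in>J. bnorm n l (z l))"
proof (cases "\<exists>l\<in>J. bnorm n l (z l) = 0")
  case True
  then obtain l0 where l0: "l0 \<in> J" "bnorm n l0 (z l0) = 0" by blast
  have "z l0 u = 0" if "u \<in> idx n l0" for u
    using l0 that sum_nonneg_eq_0_iff[OF partition_on_finite_idx[OF S J l0(1)], where f = "\<lambda>u. (z l0 u)\<^sup>2"]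
    by (simp add: bnorm_def)
  then have "pform n S J B z = pform n S J B (\<lambda>l u. (if l = l0 then 0 else 1) * z l u)"
    by (intro pform_cong[OF J]) auto
  also have "\<dots> = 0"
    unfolding pform_scale using l0(1) partition_on_finite[OF S J] by simp
  moreover have "(\<Prod>l\<in>J. bnorm n l (z l)) = 0"
    using l0 partition_on_finite[OF S J] by (intro prod_zero) auto
  ultimately show ?thesis by simp
next
  case False
  define N where "N l = bnorm n l (z l)" for l
  have N_pos: "0 < N l" if "l \<in> J" for l
    using False that bnorm_nonneg[of n l "z l"] unfolding N_def by fastforce
  define y where "y l u = z l u / N l" for l u
  have "pform n S J B z = pform n S J B (\<lambda>l u. N l * y l u)"
    using N_pos by (intro pform_cong[OF J]) (simp add: y_def less_imp_neq[symmetric])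
  also have "\<dots> = (\<Prod>l\<in>J. N l) * pform n S J B y"
    by (rule pform_scale)
  also have "\<dots> \<le> (\<Prod>l\<in>J. N l) * pnorm n S J B"
  proof (intro mult_left_mono pform_le_pnorm[OF S J Jne] ballI prod_nonneg)
    fix l assume "l \<in> J"
    have "bnorm n l (y l) = \<bar>1 / N l\<bar> * N l"
      unfolding y_def N_def using bnorm_scale[of n l "1 / bnorm n l (z l)" "z l"] by simp
    then show "bnorm n l (y l) \<le> 1" using N_pos[OF \<open>l \<in> J\<close>] by simp
  qed (use N_pos in \<open>auto simp: less_imp_le\<close>)
  finally show ?thesis unfolding N_def by (simp add: mult.commute)
qed

lemma abs_pform_le_pnorm_mult_bnorm:
  assumes S: "finite S" and J: "partition_on S J" and Jne: "J \<noteq> {}"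
  shows "\<bar>pform n S J B z\<bar> \<le> pnorm n S J B * (\<Prod>l\<in>J. bnorm n l (z l))"
proof -
  obtain l0 where l0: "l0 \<in> J" using Jne by blast
  define c :: "nat set \<Rightarrow> real" where "c l = (if l = l0 then -1 else 1)" for l
  have "- pform n S J B z = pform n S J B (\<lambda>l u. c l * z l u)"
    unfolding pform_scale c_def using l0 partition_on_finite[OF S J] by (simp add: prod.delta)
  also have "\<dots> \<le> pnorm n S J B * (\<Prod>l\<in>J. bnorm n l (\<lambda>u. c l * z l u))"
    by (rule pform_le_pnorm_mult_bnorm[OF S J Jne])
  also have "(\<Prod>l\<in>J. bnorm n l (\<lambda>u. c l * z l u)) = (\<Prod>l\<in>J. bnorm n l (z l))"
    unfolding bnorm_scale c_def by (intro prod.cong) auto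
  finally show ?thesis using pform_le_pnorm_mult_bnorm[OF S J Jne, of n B z] by linarith
qed

lemma abs_pform_le_pnorm:
  assumes S: "finite S" and J: "partition_on S J" and Jne: "J \<noteq> {}"
    and x: "\<forall>l\<in>J. bnorm n l (x l) \<le> 1"
  shows "\<bar>pform n S J B x\<bar> \<le> pnorm n S J B"
proof -
  have "(\<Prod>l\<in>J. bnorm n l (x l)) \<le> 1"
    using x by (intro prod_le_1) (auto simp: bnorm_nonneg)
  then have "pnorm n S J B * (\<Prod>l\<in>J. bnorm n l (x l)) \<le> pnorm n S J B"
    using pnorm_nonneg[OF S J] by (simp add: mult_left_le)
  then show ?thesis using abs_pform_le_pnorm_mult_bnorm[OF S J Jne, of n B x] by linarith
qed

lemma pnorm_diff_le:
  assumes S: "finite S" and J: "partition_on S J"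
  shows "pnorm n S J (\<lambda>i. B1 i - B2 i) \<le> pnorm n S J B1 + pnorm n S J B2"
proof (cases "J = {}")
  case True
  then show ?thesis by (simp add: pnorm_def sum_subtractf abs_triangle_ineq4)
next
  case False
  show ?thesis
  proof (rule pnorm_le_bound[OF False])
    fix x assume "\<forall>l\<in>J. bnorm n l (x l) \<le> 1"
    then show "pform n S J (\<lambda>i. B1 i - B2 i) x \<le> pnorm n S J B1 + pnorm n S J B2"
      unfolding pform_diff using abs_pform_le_pnorm[OF S J False] by (smt (verit))
  qed
qed

lemma pnorm_mult_block_weight:
  assumes S: "finite S" and J: "partition_on S J"
    and M: "\<And>l. l \<in> J \<Longrightarrow> 0 \<le> M l"
    and w: "\<And>l u. l \<in> J \<Longrightarrow> u \<in> idx n l \<Longrightarrow> \<bar>w l u\<bar> \<le> M l"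
  shows "pnorm n S J (\<lambda>i. B i * (c * (\<Prod>l\<in>J. w l (restrict i l))))
           \<le> \<bar>c\<bar> * (\<Prod>l\<in>J. M l) * pnorm n S J B"
proof (cases "J = {}")
  case True
  then show ?thesis by (simp add: pnorm_def sum_distrib_right[symmetric] abs_mult)
next
  case False
  show ?thesis
  proof (rule pnorm_le_bound[OF False])
    fix x assume x: "\<forall>l\<in>J. bnorm n l (x l) \<le> 1"
    have "(\<Prod>l\<in>J. bnorm n l (\<lambda>u. w l u * x l u)) \<le> (\<Prod>l\<in>J. M l * bnorm n l (x l))"
    proof (rule prod_mono)
      fix l assume l: "l \<in> J"
      show "0 \<le> bnorm n l (\<lambda>u. w l u * x l u) \<and> bnorm n l (\<lambda>u. w l u * x l u) \<le> M l * bnorm n l (x l)"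
        using bnorm_mult_le[OF partition_on_finite_idx[OF S J l] M[OF l] w[OF l]]
        by (simp add: bnorm_nonneg)
    qed
    also have "\<dots> \<le> (\<Prod>l\<in>J. M l)"
      using x M by (intro prod_mono) (auto simp: bnorm_nonneg mult_left_le)
    finally have "pnorm n S J B * (\<Prod>l\<in>J. bnorm n l (\<lambda>u. w l u * x l u))
        \<le> pnorm n S J B * (\<Prod>l\<in>J. M l)"
      by (rule mult_left_mono[OF _ pnorm_nonneg[OF S J]])
    with abs_pform_le_pnorm_mult_bnorm[OF S J False, of n B "\<lambda>l u. w l u * x l u"]
    have bound: "\<bar>pform n S J B (\<lambda>l u. w l u * x l u)\<bar> \<le> pnorm n S J B * (\<Prod>l\<in>J. M l)"
      by linarith
    have "pform n S J (\<lambda>i. B i * (c * (\<Prod>l\<in>J. w l (restrict i l)))) x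
        \<le> \<bar>c\<bar> * \<bar>pform n S J B (\<lambda>l u. w l u * x l u)\<bar>"
      unfolding pform_mult_weight abs_mult[symmetric] by (rule abs_ge_self)
    also have "\<dots> \<le> \<bar>c\<bar> * (pnorm n S J B * (\<Prod>l\<in>J. M l))"
      using bound by (rule mult_left_mono) simp
    finally show "pform n S J (\<lambda>i. B i * (c * (\<Prod>l\<in>J. w l (restrict i l)))) x
        \<le> \<bar>c\<bar> * (\<Prod>l\<in>J. M l) * pnorm n S J B"
      by (simp add: mult_ac)
  qed
qed

lemma pnorm_mult_block_weight_le:
  assumes S: "finite S" and J: "partition_on S J" and c: "\<bar>c\<bar> \<le> 1"
    and w: "\<And>l u. l \<in> J \<Longrightarrow> u \<in> idx n l \<Longrightarrow> \<bar>w l u\<bar> \<le> 1"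
  shows "pnorm n S J (\<lambda>i. B i * (c * (\<Prod>l\<in>J. w l (restrict i l)))) \<le> pnorm n S J B"
proof -
  have "pnorm n S J (\<lambda>i. B i * (c * (\<Prod>l\<in>J. w l (restrict i l)))) \<le> \<bar>c\<bar> * (\<Prod>l\<in>J. 1) * pnorm n S J B"
    by (rule pnorm_mult_block_weight[OF S J _ w]) simp_all
  also have "\<dots> \<le> pnorm n S J B"
    using c pnorm_nonneg[OF S J] by (simp add: mult_left_le_one_le)
  finally show ?thesis .
qed

lemma power2_bnorm: "(bnorm n l f)\<^sup>2 = (\<Sum>u\<in>idx n l. (f u)\<^sup>2)"
  by (simp add: bnorm_def sum_nonneg)

lemma sum_prod_le_1_of_two_unit_columns:
  fixes a :: "'t \<Rightarrow> 'l \<Rightarrow> real"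
  assumes J: "finite J" "l1 \<in> J" "l2 \<in> J" "l1 \<noteq> l2"
    and a: "\<And>t l. l \<in> J \<Longrightarrow> 0 \<le> a t l" "\<And>t l. l \<in> J \<Longrightarrow> a t l \<le> 1"
    and col: "(\<Sum>t\<in>T. (a t l1)\<^sup>2) \<le> 1" "(\<Sum>t\<in>T. (a t l2)\<^sup>2) \<le> 1"
  shows "(\<Sum>t\<in>T. \<Prod>l\<in>J. a t l) \<le> 1"
proof -
  have "(\<Prod>l\<in>J. a t l) \<le> ((a t l1)\<^sup>2 + (a t l2)\<^sup>2) / 2" for t
  proof -
    have "(\<Prod>l\<in>J. a t l) = a t l1 * (a t l2 * (\<Prod>l\<in>J - {l1} - {l2}. a t l))"
      using J by (simp add: prod.remove[of J l1] prod.remove[of "J - {l1}" l2])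
    also have "\<dots> \<le> a t l1 * a t l2"
      using J a by (intro mult_left_mono mult_right_le_one_le prod_le_1 prod_nonneg) auto
    also have "\<dots> \<le> ((a t l1)\<^sup>2 + (a t l2)\<^sup>2) / 2"
      using sum_squares_bound[of "a t l1" "a t l2"] by simp
    finally show ?thesis .
  qed
  then have "(\<Sum>t\<in>T. \<Prod>l\<in>J. a t l) \<le> (\<Sum>t\<in>T. ((a t l1)\<^sup>2 + (a t l2)\<^sup>2) / 2)"
    by (rule sum_mono)
  also have "\<dots> = ((\<Sum>t\<in>T. (a t l1)\<^sup>2) + (\<Sum>t\<in>T. (a t l2)\<^sup>2)) / 2"
    by (simp add: sum_divide_distrib[symmetric] sum.distrib)
  finally show ?thesis using col by simp
qed

lemma sum_power2_bnorm_level_sets_le: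
  assumes k1: "k1 \<in> K \<inter> l"
  shows "(\<Sum>t<n. (bnorm n l (\<lambda>u. of_bool (\<forall>k\<in>K \<inter> l. u k = t) * f u))\<^sup>2) \<le> (bnorm n l f)\<^sup>2"
proof -
  have "(\<Sum>t<n. (of_bool (\<forall>k\<in>K \<inter> l. u k = t) * f u)\<^sup>2) \<le> (f u)\<^sup>2" for u :: "nat \<Rightarrow> nat"
  proof -
    have "(\<Sum>t<n. (of_bool (\<forall>k\<in>K \<inter> l. u k = t) * f u)\<^sup>2)
        \<le> (\<Sum>t<n. if t = u k1 then (f u)\<^sup>2 else 0)"
    proof (rule sum_mono)
      fix t
      show "(of_bool (\<forall>k\<in>K \<inter> l. u k = t) * f u)\<^sup>2 \<le> (if t = u k1 then (f u)\<^sup>2 else 0)"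
      proof (cases "\<forall>k\<in>K \<inter> l. u k = t")
        case True
        have "u k1 = t" using True k1 by (rule bspec)
        with True show ?thesis by simp
      qed simp
    qed
    also have "\<dots> \<le> (f u)\<^sup>2" by (simp add: sum.delta)
    finally show ?thesis .
  qed
  then have le: "(\<Sum>u\<in>idx n l. \<Sum>t<n. (of_bool (\<forall>k\<in>K \<inter> l. u k = t) * f u)\<^sup>2)
      \<le> (\<Sum>u\<in>idx n l. (f u)\<^sup>2)"
    by (rule sum_mono)
  show ?thesis unfolding power2_bnorm by (subst sum.swap) (rule le)
qed

lemma prod_of_bool_eq: "finite J \<Longrightarrow> (\<Prod>l\<in>J. (of_bool (P l) :: real)) = of_bool (\<forall>l\<in>J. P l)"
  by (induction J rule: finite_induct) auto

lemma of_bool_diagonal_eq_sum: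
  fixes i :: "'a \<Rightarrow> nat"
  assumes J: "finite J" "K \<subseteq> \<Union>J" and k0: "k0 \<in> K" "i k0 < n"
  shows "(of_bool (\<forall>k\<in>K. \<forall>k'\<in>K. i k = i k') :: real)
           = (\<Sum>t<n. \<Prod>l\<in>J. of_bool (\<forall>k\<in>K \<inter> l. restrict i l k = t))"
proof -
  have "(\<Prod>l\<in>J. of_bool (\<forall>k\<in>K \<inter> l. restrict i l k = t)) = (of_bool (\<forall>k\<in>K. i k = t) :: real)" for t
  proof -
    have "(\<forall>l\<in>J. \<forall>k\<in>K \<inter> l. restrict i l k = t) \<longleftrightarrow> (\<forall>k\<in>K. i k = t)"
    proof
      assume all: "\<forall>l\<in>J. \<forall>k\<in>K \<inter> l. restrict i l k = t"
      show "\<forall>k\<in>K. i k = t"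
      proof
        fix k assume "k \<in> K"
        then obtain l where "l \<in> J" "k \<in> l" using J(2) by blast
        then show "i k = t" using all \<open>k \<in> K\<close> by fastforce
      qed
    qed simp
    then show ?thesis by (simp add: prod_of_bool_eq[OF J(1)])
  qed
  moreover have "(of_bool (\<forall>k\<in>K. i k = t) :: real)
      = (if t = i k0 then of_bool (\<forall>k\<in>K. \<forall>k'\<in>K. i k = i k') else 0)" for t
  proof -
    have "(\<forall>k\<in>K. i k = t) \<longleftrightarrow> t = i k0 \<and> (\<forall>k\<in>K. \<forall>k'\<in>K. i k = i k')"
      using k0(1) by metis
    then show ?thesis by simp
  qed
  ultimately have "(\<Sum>t<n. \<Prod>l\<in>J. of_bool (\<forall>k\<in>K \<inter> l. restrict i l k = t))
      = (\<Sum>t<n. if t = i k0 then (of_bool (\<forall>k\<in>K. \<forall>k'\<in>K. i k = i k') :: real) else 0)"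
    by simp
  also have "\<dots> = of_bool (\<forall>k\<in>K. \<forall>k'\<in>K. i k = i k')"
    using k0(2) by simp
  finally show ?thesis ..
qed

lemma pform_mult_diagonal_eq_sum:
  assumes S: "finite S" and J: "partition_on S J" and K: "K \<subseteq> S" "K \<noteq> {}"
  shows "pform n S J (\<lambda>i. B i * of_bool (\<forall>k\<in>K. \<forall>k'\<in>K. i k = i k')) x
      = (\<Sum>t<n. pform n S J B (\<lambda>l u. of_bool (\<forall>k\<in>K \<inter> l. u k = t) * x l u))"
proof -
  obtain k0 where k0: "k0 \<in> K" using K(2) by blast
  have "B i * of_bool (\<forall>k\<in>K. \<forall>k'\<in>K. i k = i k') * (\<Prod>l\<in>J. x l (restrict i l))
      = (\<Sum>t<n. B i * (\<Prod>l\<in>J. of_bool (\<forall>k\<in>K \<inter> l. restrict i l k = t) * x l (restrict i l)))"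
    if i: "i \<in> idx n S" for i
  proof -
    have "i k0 < n" using i k0 K by (auto simp: idx_def PiE_iff)
    moreover have "K \<subseteq> \<Union>J" using K J by (simp add: partition_on_def)
    ultimately have "(of_bool (\<forall>k\<in>K. \<forall>k'\<in>K. i k = i k') :: real)
        = (\<Sum>t<n. \<Prod>l\<in>J. of_bool (\<forall>k\<in>K \<inter> l. restrict i l k = t))"
      by (intro of_bool_diagonal_eq_sum[OF partition_on_finite[OF S J] _ k0])
    then show ?thesis
      by (simp only: prod.distrib sum_distrib_left sum_distrib_right mult.assoc)
  qed
  then show ?thesis unfolding pform_def by (subst sum.swap) (rule sum.cong, auto)
qed

lemma pnorm_mult_diagonal_across_blocks:
  assumes S: "finite S" and J: "partition_on S J" and K: "K \<subseteq> S"
    and l12: "l1 \<in> J" "l2 \<in> J" "l1 \<noteq> l2" "K \<inter> l1 \<noteq> {}" "K \<inter> l2 \<noteq> {}"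
  shows "pnorm n S J (\<lambda>i. B i * of_bool (\<forall>k\<in>K. \<forall>k'\<in>K. i k = i k')) \<le> pnorm n S J B"
proof (rule pnorm_le_bound)
  show Jne: "J \<noteq> {}" using l12 by blast
  have finJ: "finite J" by (rule partition_on_finite[OF S J])
  fix x assume x: "\<forall>l\<in>J. bnorm n l (x l) \<le> 1"
  define e where "e t l u = (of_bool (\<forall>k\<in>K \<inter> l. u k = t) :: real)" for t l and u :: "nat \<Rightarrow> nat"
  define a where "a t l = bnorm n l (\<lambda>u. e t l u * x l u)" for t l
  have a_le_1: "a t l \<le> 1" if "l \<in> J" for t l
  proof -
    have "a t l \<le> 1 * bnorm n l (x l)"
      unfolding a_def e_def by (rule bnorm_mult_le[OF partition_on_finite_idx[OF S J that]]) auto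
    then show ?thesis using x that by fastforce
  qed
  have column: "(\<Sum>t<n. (a t l)\<^sup>2) \<le> 1" if l: "l \<in> J" and meet: "K \<inter> l \<noteq> {}" for l
  proof -
    obtain k1 where "k1 \<in> K \<inter> l" using meet by blast
    then have "(\<Sum>t<n. (a t l)\<^sup>2) \<le> (bnorm n l (x l))\<^sup>2"
      unfolding a_def e_def by (rule sum_power2_bnorm_level_sets_le)
    also have "\<dots> \<le> 1" using x l bnorm_nonneg[of n l "x l"] by (simp add: power_le_one)
    finally show ?thesis .
  qed
  have "K \<noteq> {}" using l12 by blast
  then have "pform n S J (\<lambda>i. B i * of_bool (\<forall>k\<in>K. \<forall>k'\<in>K. i k = i k')) x
      = (\<Sum>t<n. pform n S J B (\<lambda>l u. e t l u * x l u))"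
    unfolding e_def by (rule pform_mult_diagonal_eq_sum[OF S J K])
  also have "\<dots> \<le> (\<Sum>t<n. pnorm n S J B * (\<Prod>l\<in>J. a t l))"
    unfolding a_def by (intro sum_mono pform_le_pnorm_mult_bnorm[OF S J Jne])
  also have "\<dots> = pnorm n S J B * (\<Sum>t<n. \<Prod>l\<in>J. a t l)"
    by (simp add: sum_distrib_left)
  also have "\<dots> \<le> pnorm n S J B * 1"
    using l12 a_le_1 column bnorm_nonneg
    by (intro mult_left_mono pnorm_nonneg[OF S J] sum_prod_le_1_of_two_unit_columns[OF finJ])
      (auto simp: a_def)
  finally show "pform n S J (\<lambda>i. B i * of_bool (\<forall>k\<in>K. \<forall>k'\<in>K. i k = i k')) x \<le> pnorm n S J B"
    by simp
qed

lemma pnorm_mult_diagonal: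
  assumes S: "finite S" and J: "partition_on S J" and K: "K \<subseteq> S"
  shows "pnorm n S J (\<lambda>i. B i * of_bool (\<forall>k\<in>K. \<forall>k'\<in>K. i k = i k')) \<le> pnorm n S J B"
proof (cases "K = {} \<or> (\<exists>l\<in>J. K \<subseteq> l)")
  case True
  define w where "w l u = (of_bool (\<forall>k\<in>K \<inter> l. \<forall>k'\<in>K \<inter> l. u k = u k') :: real)"
    for l and u :: "nat \<Rightarrow> nat"
  have "(\<Prod>l\<in>J. w l (restrict i l)) = of_bool (\<forall>k\<in>K. \<forall>k'\<in>K. i k = i k')" for i
  proof -
    have "(\<forall>l\<in>J. \<forall>k\<in>K \<inter> l. \<forall>k'\<in>K \<inter> l. restrict i l k = restrict i l k')
        \<longleftrightarrow> (\<forall>l\<in>J. \<forall>k\<in>K \<inter> l. \<forall>k'\<in>K \<inter> l. i k = i k')"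
      by simp
    also have "\<dots> \<longleftrightarrow> (\<forall>k\<in>K. \<forall>k'\<in>K. i k = i k')"
      using True by blast
    finally have "(\<forall>l\<in>J. \<forall>k\<in>K \<inter> l. \<forall>k'\<in>K \<inter> l. restrict i l k = restrict i l k')
        \<longleftrightarrow> (\<forall>k\<in>K. \<forall>k'\<in>K. i k = i k')" .
    then show ?thesis unfolding w_def by (simp add: prod_of_bool_eq[OF partition_on_finite[OF S J]])
  qed
  moreover have "pnorm n S J (\<lambda>i. B i * (1 * (\<Prod>l\<in>J. w l (restrict i l)))) \<le> pnorm n S J B"
    by (rule pnorm_mult_block_weight_le[OF S J]) (simp_all add: w_def)
  ultimately show ?thesis by simp
next
  case False
  then obtain k1 where k1: "k1 \<in> K" by blast
  have UJ: "\<Union>J = S" using J by (simp add: partition_on_def)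
  then obtain l1 where l1: "l1 \<in> J" "k1 \<in> l1" using k1 K by blast
  with False obtain k2 where k2: "k2 \<in> K" "k2 \<notin> l1" by blast
  then obtain l2 where l2: "l2 \<in> J" "k2 \<in> l2" using UJ K by blast
  show ?thesis
    by (rule pnorm_mult_diagonal_across_blocks[OF S J K l1(1) l2(1)]) (use k1 l1 k2 l2 in auto)
qed

lemma slice_mask: "slice (mask A C) I iI j = slice A I iI j * indicator C (join_idx I iI j)"
  by (simp add: slice_eq mask_def)

lemma admissible_if_indicator_factors:
  assumes C: "C \<subseteq> idx n {..<d}"
    and factors: "\<And>J. partition_on ({..<d} - I) J \<Longrightarrow> \<exists>(c::real) w. \<bar>c\<bar> \<le> 1
        \<and> (\<forall>l\<in>J. \<forall>u\<in>idx n l. \<bar>w l u\<bar> \<le> 1)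
        \<and> (\<forall>j\<in>idx n ({..<d} - I). indicator C (join_idx I iI j) = c * (\<Prod>l\<in>J. w l (restrict j l)))"
  shows "admissible n d I iI C"
  unfolding admissible_def
proof (intro conjI C allI impI)
  fix A :: "(nat \<Rightarrow> nat) \<Rightarrow> real" and J assume J: "partition_on ({..<d} - I) J"
  from factors[OF J] obtain c :: real and w where c: "\<bar>c\<bar> \<le> 1"
    and w: "\<forall>l\<in>J. \<forall>u\<in>idx n l. \<bar>w l u\<bar> \<le> 1"
    and eq: "\<forall>j\<in>idx n ({..<d} - I). indicator C (join_idx I iI j) = c * (\<Prod>l\<in>J. w l (restrict j l))"
    by blast
  have "pnorm n ({..<d} - I) J (slice (mask A C) I iI)
      = pnorm n ({..<d} - I) J (\<lambda>j. slice A I iI j * (c * (\<Prod>l\<in>J. w l (restrict j l))))"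
    using eq by (intro pnorm_cong) (simp add: slice_mask)
  also have "\<dots> \<le> pnorm n ({..<d} - I) J (slice A I iI)"
    using c w by (intro pnorm_mult_block_weight_le[OF _ J]) auto
  finally show "pnorm n ({..<d} - I) J (slice (mask A C) I iI) \<le> pnorm n ({..<d} - I) J (slice A I iI)" .
qed

lemma admissible_cong:
  assumes "admissible n d I iI C" "C' \<subseteq> idx n {..<d}"
    and "\<And>j. j \<in> idx n ({..<d} - I) \<Longrightarrow> join_idx I iI j \<in> C' \<longleftrightarrow> join_idx I iI j \<in> C"
  shows "admissible n d I iI C'"
proof -
  have "slice (mask A C') I iI j = slice (mask A C) I iI j" if "j \<in> idx n ({..<d} - I)" for A j
    using assms(3)[OF that] by (simp add: slice_mask indicator_def)
  then show ?thesis
    using assms(1,2) unfolding admissible_def by (metis (no_types, lifting) pnorm_cong)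
qed

lemma admissible_Int:
  assumes "admissible n d I iI C1" "admissible n d I iI C2"
  shows "admissible n d I iI (C1 \<inter> C2)"
  unfolding admissible_def
proof (intro conjI allI impI)
  show "C1 \<inter> C2 \<subseteq> idx n {..<d}" using assms unfolding admissible_def by blast
  fix A :: "(nat \<Rightarrow> nat) \<Rightarrow> real" and J assume J: "partition_on ({..<d} - I) J"
  have "mask A (C1 \<inter> C2) = mask (mask A C1) C2"
    by (simp add: mask_def fun_eq_iff indicator_inter_arith)
  then have "pnorm n ({..<d} - I) J (slice (mask A (C1 \<inter> C2)) I iI)
      \<le> pnorm n ({..<d} - I) J (slice (mask A C1) I iI)"
    using assms(2) J unfolding admissible_def by simp
  also have "\<dots> \<le> pnorm n ({..<d} - I) J (slice A I iI)"
    using assms(1) J unfolding admissible_def by simp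
  finally show "pnorm n ({..<d} - I) J (slice (mask A (C1 \<inter> C2)) I iI)
      \<le> pnorm n ({..<d} - I) J (slice A I iI)" .
qed

lemma admissible_row:
  assumes I: "I \<subseteq> {..<d}" and iI: "iI \<in> idx n I" and k: "k ` M \<subseteq> {..<d}"
  shows "admissible n d I iI {i \<in> idx n {..<d}. \<forall>m\<in>M. i (k m) = r m}"
proof (rule admissible_if_indicator_factors)
  fix J assume J: "partition_on ({..<d} - I) J"
  have UJ: "\<Union>J = {..<d} - I" using J by (simp add: partition_on_def)
  define c where "c = (of_bool (\<forall>m\<in>M. k m \<in> I \<longrightarrow> iI (k m) = r m) :: real)"
  define w where "w l u = (of_bool (\<forall>m\<in>M. k m \<in> l \<longrightarrow> u (k m) = r m) :: real)"
    for l and u :: "nat \<Rightarrow> nat"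
  have "indicator {i \<in> idx n {..<d}. \<forall>m\<in>M. i (k m) = r m} (join_idx I iI j)
      = c * (\<Prod>l\<in>J. w l (restrict j l))" if j: "j \<in> idx n ({..<d} - I)" for j
  proof -
    have "(\<forall>m\<in>M. join_idx I iI j (k m) = r m) \<longleftrightarrow>
        (\<forall>m\<in>M. k m \<in> I \<longrightarrow> iI (k m) = r m) \<and> (\<forall>l\<in>J. \<forall>m\<in>M. k m \<in> l \<longrightarrow> restrict j l (k m) = r m)"
      using k UJ unfolding join_idx_def by (auto; metis DiffI Diff_iff UnionE image_subset_iff lessThan_iff)
    then show ?thesis
      using join_idx_in_idx[OF iI I j] unfolding c_def w_def
      by (simp add: prod_of_bool_eq[OF partition_on_finite[OF _ J]] indicator_def)
  qed
  moreover have "\<bar>c\<bar> \<le> 1" "\<forall>l\<in>J. \<forall>u\<in>idx n l. \<bar>w l u\<bar> \<le> 1" unfolding c_def w_def by auto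
  ultimately show "\<exists>(c::real) w. \<bar>c\<bar> \<le> 1 \<and> (\<forall>l\<in>J. \<forall>u\<in>idx n l. \<bar>w l u\<bar> \<le> 1)
      \<and> (\<forall>j\<in>idx n ({..<d} - I). indicator {i \<in> idx n {..<d}. \<forall>m\<in>M. i (k m) = r m} (join_idx I iI j)
            = c * (\<Prod>l\<in>J. w l (restrict j l)))"
    by blast
qed auto

lemma admissible_diagonal:
  assumes I: "I \<subseteq> {..<d}" and iI: "iI \<in> idx n I" and K: "K \<subseteq> {..<d}"
  shows "admissible n d I iI {i \<in> idx n {..<d}. \<forall>k\<in>K. \<forall>l\<in>K. i k = i l}"
proof (cases "K \<inter> I = {}")
  case False
  then obtain k0 where k0: "k0 \<in> K" "k0 \<in> I" by blast
  \<comment> \<open>A coordinate of K is frozen to iI k0, so on the slice the diagonal is a row.\<close>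
  have "admissible n d I iI {i \<in> idx n {..<d}. \<forall>k\<in>K. i (id k) = iI k0}"
    using K by (intro admissible_row[OF I iI]) auto
  then show ?thesis
  proof (rule admissible_cong)
    fix j assume "j \<in> idx n ({..<d} - I)"
    have "(\<forall>k\<in>K. \<forall>l\<in>K. f k = f l) \<longleftrightarrow> (\<forall>k\<in>K. f k = f k0)" for f :: "nat \<Rightarrow> nat"
      using k0(1) by metis
    moreover have "join_idx I iI j k0 = iI k0" using k0 by (simp add: join_idx_def)
    ultimately show "join_idx I iI j \<in> {i \<in> idx n {..<d}. \<forall>k\<in>K. \<forall>l\<in>K. i k = i l}
        \<longleftrightarrow> join_idx I iI j \<in> {i \<in> idx n {..<d}. \<forall>k\<in>K. i (id k) = iI k0}"
      by simp
  qed auto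
next
  case True
  show ?thesis
    unfolding admissible_def
  proof (intro conjI allI impI)
    fix A :: "(nat \<Rightarrow> nat) \<Rightarrow> real" and J assume J: "partition_on ({..<d} - I) J"
    have "pnorm n ({..<d} - I) J (slice (mask A {i \<in> idx n {..<d}. \<forall>k\<in>K. \<forall>l\<in>K. i k = i l}) I iI)
        = pnorm n ({..<d} - I) J (\<lambda>j. slice A I iI j * of_bool (\<forall>k\<in>K. \<forall>k'\<in>K. j k = j k'))"
    proof (rule pnorm_cong)
      fix j assume "j \<in> idx n ({..<d} - I)"
      moreover have "join_idx I iI j k = j k" if "k \<in> K" for k
        using True that by (auto simp: join_idx_def)
      ultimately show "slice (mask A {i \<in> idx n {..<d}. \<forall>k\<in>K. \<forall>l\<in>K. i k = i l}) I iI j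
          = slice A I iI j * of_bool (\<forall>k\<in>K. \<forall>k'\<in>K. j k = j k')"
        using join_idx_in_idx[OF iI I] by (simp add: slice_mask indicator_def)
    qed
    also have "\<dots> \<le> pnorm n ({..<d} - I) J (slice A I iI)"
      using True K by (intro pnorm_mult_diagonal[OF _ J]) auto
    finally show "pnorm n ({..<d} - I) J (slice (mask A {i \<in> idx n {..<d}. \<forall>k\<in>K. \<forall>l\<in>K. i k = i l}) I iI)
        \<le> pnorm n ({..<d} - I) J (slice A I iI)" .
  qed auto
qed

lemma admissible_diagonal_blocks:
  assumes I: "I \<subseteq> {..<d}" and iI: "iI \<in> idx n I" and F: "finite F" "\<Union>F \<subseteq> {..<d}"
  shows "admissible n d I iI {i \<in> idx n {..<d}. \<forall>B\<in>F. \<forall>k\<in>B. \<forall>l\<in>B. i k = i l}"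
  using F
proof (induction F rule: finite_induct)
  case empty
  then show ?case using admissible_diagonal[OF I iI, of "{}"] by simp
next
  case (insert B F)
  have "{i \<in> idx n {..<d}. \<forall>B\<in>insert B F. \<forall>k\<in>B. \<forall>l\<in>B. i k = i l}
      = {i \<in> idx n {..<d}. \<forall>k\<in>B. \<forall>l\<in>B. i k = i l} \<inter> {i \<in> idx n {..<d}. \<forall>B\<in>F. \<forall>k\<in>B. \<forall>l\<in>B. i k = i l}"
    by blast
  then show ?case using insert admissible_Int[OF admissible_diagonal[OF I iI, of B]] by simp
qed

lemma mask_Diff_Un: "mask A (C - (X \<union> U)) = (\<lambda>i. mask A (C - U) i - mask A (C \<inter> X - U) i)"
  by (auto simp: mask_def indicator_def fun_eq_iff)

lemma pnorm_slice_mask_Diff_UN_le: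
  assumes J: "partition_on ({..<d} - I) J" and F: "finite F"
    and G: "\<forall>e\<in>F. admissible n d I iI (G e)" and C: "admissible n d I iI C"
  shows "pnorm n ({..<d} - I) J (slice (mask A (C - (\<Union>e\<in>F. G e))) I iI)
           \<le> 2 ^ card F * pnorm n ({..<d} - I) J (slice A I iI)"
  using F G C
proof (induction F arbitrary: C rule: finite_induct)
  case empty
  then show ?case using J unfolding admissible_def by simp
next
  case (insert e F)
  let ?N = "\<lambda>X. pnorm n ({..<d} - I) J (slice (mask A X) I iI)"
  have "?N (C - (\<Union>e\<in>insert e F. G e))
      = pnorm n ({..<d} - I) J (\<lambda>j. slice (mask A (C - (\<Union>e\<in>F. G e))) I iI j
           - slice (mask A (C \<inter> G e - (\<Union>e\<in>F. G e))) I iI j)"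
    by (simp add: mask_Diff_Un slice_def)
  also have "\<dots> \<le> ?N (C - (\<Union>e\<in>F. G e)) + ?N (C \<inter> G e - (\<Union>e\<in>F. G e))"
    by (rule pnorm_diff_le[OF _ J]) simp
  also have "\<dots> \<le> 2 ^ card F * pnorm n ({..<d} - I) J (slice A I iI)
      + 2 ^ card F * pnorm n ({..<d} - I) J (slice A I iI)"
    using insert by (intro add_mono insert.IH admissible_Int) auto
  finally show ?case using insert.hyps by simp
qed

lemma all_equal_on_Un:
  assumes B1: "\<forall>a\<in>B1. \<forall>b\<in>B1. f a = f b" and B2: "\<forall>a\<in>B2. \<forall>b\<in>B2. f a = f b"
    and kl: "k \<in> B1" "l \<in> B2" "f k = f l"
  shows "\<forall>a\<in>B1 \<union> B2. \<forall>b\<in>B1 \<union> B2. f a = f b"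
proof -
  have "f a = f k" if "a \<in> B1 \<union> B2" for a
  proof (cases "a \<in> B1")
    case True
    from B1[rule_format, OF True kl(1)] show ?thesis .
  next
    case False
    then have "a \<in> B2" using that by simp
    from B2[rule_format, OF this kl(2)] show ?thesis using kl(3) by simp
  qed
  then show ?thesis by simp
qed

lemma Lset_iff:
  assumes K: "partition_on {..<d} K" and i: "i \<in> idx n {..<d}"
  shows "i \<in> Lset n d K \<longleftrightarrow> (\<forall>B\<in>K. \<forall>k\<in>B. \<forall>l\<in>B. i k = i l)
    \<and> (\<forall>B1\<in>K. \<forall>B2\<in>K. B1 \<noteq> B2 \<longrightarrow> \<not> (\<forall>k\<in>B1 \<union> B2. \<forall>l\<in>B1 \<union> B2. i k = i l))"
    (is "_ \<longleftrightarrow> ?blocks \<and> ?pairs")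
proof -
  have UK: "\<Union>K = {..<d}" and neK: "{} \<notin> K" using K by (simp_all add: partition_on_def)
  have same: "B1 = B2" if "B1 \<in> K" "B2 \<in> K" "k \<in> B1" "k \<in> B2" for B1 B2 k
    using that partition_onD2[OF K] unfolding pairwise_def disjnt_def by blast
  have "(\<forall>k<d. \<forall>l<d. (i k = i l \<longleftrightarrow> (\<exists>B\<in>K. k \<in> B \<and> l \<in> B))) \<longleftrightarrow> ?blocks \<and> ?pairs"
  proof
    assume L: "\<forall>k<d. \<forall>l<d. (i k = i l \<longleftrightarrow> (\<exists>B\<in>K. k \<in> B \<and> l \<in> B))"
    have L': "i k = i l \<longleftrightarrow> (\<exists>B\<in>K. k \<in> B \<and> l \<in> B)" if "k \<in> \<Union>K" "l \<in> \<Union>K" for k l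
      using L that unfolding UK by simp
    show "?blocks \<and> ?pairs"
    proof
      show ?blocks using L' by blast
      show ?pairs
      proof (intro ballI impI notI)
        fix B1 B2 assume B: "B1 \<in> K" "B2 \<in> K" "B1 \<noteq> B2"
          and const: "\<forall>k\<in>B1 \<union> B2. \<forall>l\<in>B1 \<union> B2. i k = i l"
        have "B1 \<noteq> {}" "B2 \<noteq> {}" using B(1,2) neK by auto
        then obtain k l where kl: "k \<in> B1" "l \<in> B2" by blast
        have "k \<in> \<Union>K" "l \<in> \<Union>K" using kl B(1,2) by blast+
        moreover have "i k = i l" using const kl by blast
        ultimately obtain B where "B \<in> K" "k \<in> B" "l \<in> B" using L' by blast
        then have "B = B1" "B = B2" using same kl B(1,2) by blast+
        then show False using B(3) by simp
      qed
    qed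
  next
    assume H: "?blocks \<and> ?pairs"
    show "\<forall>k<d. \<forall>l<d. (i k = i l \<longleftrightarrow> (\<exists>B\<in>K. k \<in> B \<and> l \<in> B))"
    proof (intro allI impI iffI)
      fix k l assume "k < d" "l < d" and eq: "i k = i l"
      then have "k \<in> \<Union>K" "l \<in> \<Union>K" unfolding UK by simp_all
      then obtain B1 B2 where B: "B1 \<in> K" "k \<in> B1" "B2 \<in> K" "l \<in> B2" by blast
      have "\<forall>a\<in>B1 \<union> B2. \<forall>b\<in>B1 \<union> B2. i a = i b"
        using bspec[OF conjunct1[OF H] B(1)] bspec[OF conjunct1[OF H] B(3)] B(2,4) eq
        by (rule all_equal_on_Un)
      then have "B1 = B2" using conjunct2[OF H] B(1,3) by blast
      then show "\<exists>B\<in>K. k \<in> B \<and> l \<in> B" using B by blast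
    next
      fix k l assume "\<exists>B\<in>K. k \<in> B \<and> l \<in> B"
      then show "i k = i l" using conjunct1[OF H] by blast
    qed
  qed
  then show ?thesis using i by (simp add: Lset_def)
qed

lemma Lset_eq_Diff:
  assumes K: "partition_on {..<d} K"
  shows "Lset n d K = {i \<in> idx n {..<d}. \<forall>B\<in>K. \<forall>k\<in>B. \<forall>l\<in>B. i k = i l}
     - (\<Union>e\<in>{e. e \<subseteq> K \<and> card e = 2}. {i \<in> idx n {..<d}. \<forall>k\<in>\<Union>e. \<forall>l\<in>\<Union>e. i k = i l})"
proof (rule set_eqI)
  fix i
  have pairs: "(\<forall>B1\<in>K. \<forall>B2\<in>K. B1 \<noteq> B2 \<longrightarrow> \<not> P (B1 \<union> B2))
      \<longleftrightarrow> (\<forall>e\<in>{e. e \<subseteq> K \<and> card e = 2}. \<not> P (\<Union>e))" for P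
  proof
    assume H: "\<forall>B1\<in>K. \<forall>B2\<in>K. B1 \<noteq> B2 \<longrightarrow> \<not> P (B1 \<union> B2)"
    show "\<forall>e\<in>{e. e \<subseteq> K \<and> card e = 2}. \<not> P (\<Union>e)"
    proof
      fix e assume "e \<in> {e. e \<subseteq> K \<and> card e = 2}"
      then obtain B1 B2 where "e = {B1, B2}" "B1 \<noteq> B2" "B1 \<in> K" "B2 \<in> K"
        by (auto simp: card_2_iff)
      then show "\<not> P (\<Union>e)" using H by simp
    qed
  next
    assume H: "\<forall>e\<in>{e. e \<subseteq> K \<and> card e = 2}. \<not> P (\<Union>e)"
    show "\<forall>B1\<in>K. \<forall>B2\<in>K. B1 \<noteq> B2 \<longrightarrow> \<not> P (B1 \<union> B2)"
    proof (intro ballI impI)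
      fix B1 B2 assume "B1 \<in> K" "B2 \<in> K" "B1 \<noteq> B2"
      then have "{B1, B2} \<in> {e. e \<subseteq> K \<and> card e = 2}" by simp
      from H[rule_format, OF this] show "\<not> P (B1 \<union> B2)" by simp
    qed
  qed
  show "i \<in> Lset n d K \<longleftrightarrow> i \<in> {i \<in> idx n {..<d}. \<forall>B\<in>K. \<forall>k\<in>B. \<forall>l\<in>B. i k = i l}
     - (\<Union>e\<in>{e. e \<subseteq> K \<and> card e = 2}. {i \<in> idx n {..<d}. \<forall>k\<in>\<Union>e. \<forall>l\<in>\<Union>e. i k = i l})"
  proof (cases "i \<in> idx n {..<d}")
    case True
    show ?thesis
      unfolding Lset_iff[OF K True] pairs[of "\<lambda>X. \<forall>k\<in>X. \<forall>l\<in>X. i k = i l"]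
      using True by blast
  qed (simp add: Lset_def)
qed

lemma pnorm_slice_mask_Lset_le:
  assumes I: "I \<subseteq> {..<d}" and iI: "iI \<in> idx n I"
    and K: "partition_on {..<d} K" and J: "partition_on ({..<d} - I) J"
  shows "pnorm n ({..<d} - I) J (slice (mask A (Lset n d K)) I iI)
         \<le> 2 ^ (card K * (card K - 1) div 2) * pnorm n ({..<d} - I) J (slice A I iI)"
proof -
  define Pairs where "Pairs = {e. e \<subseteq> K \<and> card e = 2}"
  define G where "G e = {i \<in> idx n {..<d}. \<forall>k\<in>\<Union>e. \<forall>l\<in>\<Union>e. i k = i l}" for e
  have finK: "finite K" using finite_elements[OF _ K] by simp
  have UK: "\<Union>K = {..<d}" using K by (simp add: partition_on_def)
  have "Pairs \<subseteq> Pow K" unfolding Pairs_def by blast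
  then have fin: "finite Pairs" using finK by (simp add: finite_subset)
  have card: "card Pairs = card K * (card K - 1) div 2"
    unfolding Pairs_def n_subsets[OF finK] choose_two ..
  have "\<forall>e\<in>Pairs. admissible n d I iI (G e)"
  proof
    fix e assume "e \<in> Pairs"
    then have "\<Union>e \<subseteq> {..<d}" using UK unfolding Pairs_def by blast
    then show "admissible n d I iI (G e)" unfolding G_def by (rule admissible_diagonal[OF I iI])
  qed
  moreover have "admissible n d I iI {i \<in> idx n {..<d}. \<forall>B\<in>K. \<forall>k\<in>B. \<forall>l\<in>B. i k = i l}"
    using UK by (intro admissible_diagonal_blocks[OF I iI finK]) simp
  ultimately have "pnorm n ({..<d} - I) J (slice (mask A
        ({i \<in> idx n {..<d}. \<forall>B\<in>K. \<forall>k\<in>B. \<forall>l\<in>B. i k = i l} - (\<Union>e\<in>Pairs. G e))) I iI)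
      \<le> 2 ^ card Pairs * pnorm n ({..<d} - I) J (slice A I iI)"
    by (rule pnorm_slice_mask_Diff_UN_le[OF J fin])
  from this[unfolded card] show ?thesis unfolding Lset_eq_Diff[OF K] Pairs_def G_def .
qed

lemma abs_le_supnorm: "t < n \<Longrightarrow> \<bar>w t\<bar> \<le> supnorm n w"
  unfolding supnorm_def by (rule Max_ge) auto

lemma prod_partition_on:
  assumes "finite S" "partition_on S J"
  shows "(\<Prod>l\<in>J. \<Prod>k\<in>l. f k) = (\<Prod>k\<in>S. f k)"
proof -
  have "(\<Prod>k\<in>\<Union>J. f k) = (\<Prod>l\<in>J. \<Prod>k\<in>l. f k)"
    using assms partition_onD2[OF assms(2)]
    by (intro prod.Union_disjoint[simplified]) (auto simp: pairwise_def disjnt_def partition_on_def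
        intro: finite_subset)
  then show ?thesis using partition_onD1[OF assms(2)] by simp
qed

lemma tprod_join_idx:
  assumes I: "I \<subseteq> {..<d}" and J: "partition_on ({..<d} - I) J"
  shows "tprod d v (join_idx I iI j) = (\<Prod>k\<in>I. v k (iI k)) * (\<Prod>l\<in>J. \<Prod>k\<in>l. v k (restrict j l k))"
proof -
  have "(\<Prod>l\<in>J. \<Prod>k\<in>l. v k (restrict j l k)) = (\<Prod>l\<in>J. \<Prod>k\<in>l. v k (join_idx I iI j k))"
    using partition_on_block_subset[OF _ J] by (intro prod.cong refl) (auto simp: join_idx_def)
  also have "\<dots> = (\<Prod>k\<in>{..<d} - I. v k (join_idx I iI j k))"
    by (rule prod_partition_on[OF _ J]) simp
  finally show ?thesis
    using I prod.subset_diff[of I "{..<d}" "\<lambda>k. v k (join_idx I iI j k)"]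
    by (simp add: tprod_def join_idx_def)
qed

lemma pnorm_slice_mult_tprod_le:
  assumes n: "0 < n" and I: "I \<subseteq> {..<d}" and iI: "iI \<in> idx n I"
    and J: "partition_on ({..<d} - I) J"
  shows "pnorm n ({..<d} - I) J (slice (\<lambda>i. A i * tprod d v i) I iI)
         \<le> pnorm n ({..<d} - I) J (slice A I iI) * (\<Prod>k<d. supnorm n (v k))"
proof -
  let ?M = "\<lambda>k. supnorm n (v k)" and ?P = "pnorm n ({..<d} - I) J (slice A I iI)"
  have M_nonneg: "0 \<le> ?M k" for k using abs_le_supnorm[OF n, of "v k"] by linarith
  have abs_prod_le: "\<bar>\<Prod>k\<in>L. v k (u k)\<bar> \<le> (\<Prod>k\<in>L. ?M k)" if "u \<in> idx n L" for L u
    unfolding abs_prod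
  proof (rule prod_mono)
    fix k assume "k \<in> L"
    then have "u k < n" using that by (auto simp: idx_def PiE_iff)
    then show "0 \<le> \<bar>v k (u k)\<bar> \<and> \<bar>v k (u k)\<bar> \<le> ?M k" by (simp add: abs_le_supnorm)
  qed
  have "pnorm n ({..<d} - I) J (slice (\<lambda>i. A i * tprod d v i) I iI)
      = pnorm n ({..<d} - I) J (\<lambda>j. slice A I iI j
          * ((\<Prod>k\<in>I. v k (iI k)) * (\<Prod>l\<in>J. (\<lambda>u. \<Prod>k\<in>l. v k (u k)) (restrict j l))))"
    by (intro pnorm_cong) (simp add: slice_eq tprod_join_idx[OF I J])
  also have "\<dots> \<le> \<bar>\<Prod>k\<in>I. v k (iI k)\<bar> * (\<Prod>l\<in>J. \<Prod>k\<in>l. ?M k) * ?P"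
    by (rule pnorm_mult_block_weight[OF _ J]) (simp_all add: prod_nonneg M_nonneg abs_prod_le)
  also have "\<dots> \<le> (\<Prod>k\<in>I. ?M k) * (\<Prod>k\<in>{..<d} - I. ?M k) * ?P"
    unfolding prod_partition_on[OF _ J, simplified]
    by (intro mult_right_mono pnorm_nonneg[OF _ J] abs_prod_le[OF iI] prod_nonneg M_nonneg) simp_all
  also have "\<dots> = ?P * (\<Prod>k<d. ?M k)"
    using I prod.subset_diff[of I "{..<d}" ?M] by (simp add: mult_ac)
  finally show ?thesis .
qed

theorem lemma6p5:
  fixes n d :: nat and A :: "(nat \<Rightarrow> nat) \<Rightarrow> real" and I :: "nat set" and iI :: "nat \<Rightarrow> nat"
  assumes "0 < n" and "I \<subseteq> {..<d}" and "iI \<in> idx n I"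
  shows
   "(\<forall>(l::nat) (k::nat \<Rightarrow> nat) (j::nat \<Rightarrow> nat).
       (\<forall>m m'. m < m' \<and> m' < l \<longrightarrow> k m < k m') \<and> (\<forall>m<l. k m < d \<and> j m < n) \<longrightarrow>
       admissible n d I iI {i \<in> idx n {..<d}. \<forall>m<l. i (k m) = j m})
  \<and> (\<forall>K. K \<subseteq> {..<d} \<longrightarrow>
       admissible n d I iI {i \<in> idx n {..<d}. \<forall>k\<in>K. \<forall>l\<in>K. i k = i l})
  \<and> (\<forall>C1 C2. admissible n d I iI C1 \<and> admissible n d I iI C2 \<longrightarrow> admissible n d I iI (C1 \<inter> C2))
  \<and> (\<forall>\<K> \<J>. partition_on {..<d} \<K> \<and> partition_on ({..<d} - I) \<J> \<longrightarrow>
       pnorm n ({..<d} - I) \<J> (slice (mask A (Lset n d \<K>)) I iI)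
         \<le> 2 ^ (card \<K> * (card \<K> - 1) div 2) * pnorm n ({..<d} - I) \<J> (slice A I iI))
  \<and> (\<forall>v \<J>. partition_on ({..<d} - I) \<J> \<longrightarrow>
       pnorm n ({..<d} - I) \<J> (slice (\<lambda>i. A i * tprod d v i) I iI)
         \<le> pnorm n ({..<d} - I) \<J> (slice A I iI) * (\<Prod>k<d. supnorm n (v k)))"
proof (intro conjI allI impI)
  fix l :: nat and k j :: "nat \<Rightarrow> nat"
  assume "(\<forall>m m'. m < m' \<and> m' < l \<longrightarrow> k m < k m') \<and> (\<forall>m<l. k m < d \<and> j m < n)"
  then have "k ` {..<l} \<subseteq> {..<d}" by auto
  from admissible_row[OF assms(2,3) this, of j]
  show "admissible n d I iI {i \<in> idx n {..<d}. \<forall>m<l. i (k m) = j m}"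
    by (simp only: Ball_def lessThan_iff)
next
  fix K :: "nat set" assume "K \<subseteq> {..<d}"
  then show "admissible n d I iI {i \<in> idx n {..<d}. \<forall>k\<in>K. \<forall>l\<in>K. i k = i l}"
    by (rule admissible_diagonal[OF assms(2,3)])
next
  fix C1 C2 assume "admissible n d I iI C1 \<and> admissible n d I iI C2"
  then show "admissible n d I iI (C1 \<inter> C2)" by (blast intro: admissible_Int)
next
  fix \<K> \<J> assume "partition_on {..<d} \<K> \<and> partition_on ({..<d} - I) \<J>"
  then show "pnorm n ({..<d} - I) \<J> (slice (mask A (Lset n d \<K>)) I iI)
      \<le> 2 ^ (card \<K> * (card \<K> - 1) div 2) * pnorm n ({..<d} - I) \<J> (slice A I iI)"
    by (blast intro: pnorm_slice_mask_Lset_le[OF assms(2,3)])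
next
  fix v \<J> assume "partition_on ({..<d} - I) \<J>"
  then show "pnorm n ({..<d} - I) \<J> (slice (\<lambda>i. A i * tprod d v i) I iI)
      \<le> pnorm n ({..<d} - I) \<J> (slice A I iI) * (\<Prod>k<d. supnorm n (v k))"
    by (rule pnorm_slice_mult_tprod_le[OF assms])
qed

end
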